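(* Let $\Delta_{1,1}=\{A=(a_{ij})\in SL_3(\mathfrak{o}) : a_{21}a_{32}-a_{22}a_{31}\neq0\}$. Then $$\Delta_{1,1}=\bigsqcup_{\substack{y_1,y_2,y_3\in Y(\mathfrak{o})\\ y_2,y_3\neq I_2}}\ \bigsqcup_{d\in D(3)}\ \bigsqcup_{u\in U(3)} \varphi_2(y_1^{-1})\,\varphi_1(y_2^{-1})\,\varphi_2(y_3^{-1})\,d\,u\,\Gamma_\infty(3),$$ i.e. $\Delta_{1,1}$ is the union of these sets and they are pairwise disjoint for distinct tuples $(y_1,y_2,y_3,d,u)$.
   Context: Let $\omega=e^{2\pi i/3}$, $\mathfrak{o}=\mathbb{Z}[\omega]$, $\mathfrak{o}^\times$ its unit group. Fix representatives of nonzero elements modulo units ("$c\in(\mathfrak{o}-\{0\})/\mathfrak{o}^\times$") and, for each nonzero $c$, representatives of $\mathfrak{o}/c\mathfrak{o}$ ("$a\in\mathfrak{o}/c\mathfrak{o}$"). $Y(\mathfrak{o})=\{\begin{pmatrix}a&b\\c&d\end{pmatrix}\in SL_2(\mathfrak{o}) : c\in(\mathfrak{o}-\{0\})/\mathfrak{o}^\times,\ a\in\mathfrak{o}/c\mathfrak{o}\}\cup\{I_2\}$. $\Gamma(3)=\{A\in SL_3(\mathfrak{o}):A\equiv I_3\pmod{3\mathfrak{o}}\}$ (entrywise), $\Gamma_\infty(3)$ its subgroup of upper triangular unipotent matrices. $D(3)$: diagonal $\mathrm{diag}(i,j,k)$ with $i,j,k\in\mathfrak{o}$, $ijk=1$.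 $U(3)$: matrices $\begin{pmatrix}1&\alpha&\beta\\&1&\gamma\\&&1\end{pmatrix}$ with $\alpha,\beta,\gamma\in\{0,1,2\}+\{0,1,2\}\omega$. For $y=\begin{pmatrix}a&b\\c&d\end{pmatrix}\in SL_2(\mathfrak{o})$, $\varphi_1(y)=\begin{pmatrix}a&b&0\\c&d&0\\0&0&1\end{pmatrix}$, $\varphi_2(y)=\begin{pmatrix}1&0&0\\0&a&b\\0&c&d\end{pmatrix}$. *)

theory Defs
  imports "HOL-Analysis.Analysis"
begin

text \<open>The ring o = Z[omega], omega = exp(2 pi i/3), realised inside the complex numbers.\<close>

definition omega :: complex where
  "omega = Complex (-1/2) (sqrt 3 / 2)"

definition Eis :: "complex set" where
  "Eis = {of_int a + of_int b * omega | a b. True}"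

definition Eis_units :: "complex set" where
  "Eis_units = {u \<in> Eis. \<exists>v\<in>Eis. u * v = 1}"

definition assoc_reps :: "complex set \<Rightarrow> bool" where
  "assoc_reps C \<longleftrightarrow> C \<subseteq> Eis - {0} \<and>
     (\<forall>x\<in>Eis - {0}. \<exists>!c. c \<in> C \<and> (\<exists>u\<in>Eis_units. x = u * c))"

definition residue_reps :: "complex \<Rightarrow> complex set \<Rightarrow> bool" where
  "residue_reps c A \<longleftrightarrow> A \<subseteq> Eis \<and>
     (\<forall>x\<in>Eis. \<exists>!a. a \<in> A \<and> (\<exists>z\<in>Eis. x - a = c * z))"

definition SL_o :: "(complex^'n^'n) set" where
  "SL_o = {A. (\<forall>i j. A $ i $ j \<in> Eis) \<and> det A = 1}"

definition Ymat :: "complex set \<Rightarrow> (complex \<Rightarrow> complex set) \<Rightarrow> (complex^2^2) set" where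
  "Ymat C R = {y \<in> SL_o. y $ 2 $ 1 \<in> C \<and> y $ 1 $ 1 \<in> R (y $ 2 $ 1)} \<union> {mat 1}"

definition M3 :: "complex \<Rightarrow> complex \<Rightarrow> complex \<Rightarrow> complex \<Rightarrow> complex \<Rightarrow> complex
    \<Rightarrow> complex \<Rightarrow> complex \<Rightarrow> complex \<Rightarrow> complex^3^3" where
  "M3 a11 a12 a13 a21 a22 a23 a31 a32 a33 = (\<chi> i j.
     if i = 1 then (if j = 1 then a11 else if j = 2 then a12 else a13)
     else if i = 2 then (if j = 1 then a21 else if j = 2 then a22 else a23)
     else (if j = 1 then a31 else if j = 2 then a32 else a33))"

definition phi1 :: "complex^2^2 \<Rightarrow> complex^3^3" where
  "phi1 y = M3 (y$1$1) (y$1$2) 0 (y$2$1) (y$2$2) 0 0 0 1"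

definition phi2 :: "complex^2^2 \<Rightarrow> complex^3^3" where
  "phi2 y = M3 1 0 0 0 (y$1$1) (y$1$2) 0 (y$2$1) (y$2$2)"

definition Gamma3 :: "(complex^3^3) set" where
  "Gamma3 = {A \<in> SL_o. \<forall>i j. \<exists>z\<in>Eis. A $ i $ j - (if i = j then 1 else 0) = 3 * z}"

definition Gamma_inf3 :: "(complex^3^3) set" where
  "Gamma_inf3 = {A \<in> Gamma3. A $ 1 $ 1 = 1 \<and> A $ 2 $ 2 = 1 \<and> A $ 3 $ 3 = 1 \<and>
                  A $ 2 $ 1 = 0 \<and> A $ 3 $ 1 = 0 \<and> A $ 3 $ 2 = 0}"

definition D3 :: "(complex^3^3) set" where
  "D3 = {M3 i 0 0 0 j 0 0 0 k | i j k. i \<in> Eis \<and> j \<in> Eis \<and> k \<in> Eis \<and> i * j * k = 1}"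

definition R9 :: "complex set" where
  "R9 = {of_int m + of_int n * omega | m n. m \<in> {0,1,2} \<and> n \<in> {0,1,2}}"

definition U3 :: "(complex^3^3) set" where
  "U3 = {M3 1 \<alpha> \<beta> 0 1 \<gamma> 0 0 1 | \<alpha> \<beta> \<gamma>. \<alpha> \<in> R9 \<and> \<beta> \<in> R9 \<and> \<gamma> \<in> R9}"

definition Delta11 :: "(complex^3^3) set" where
  "Delta11 = {A \<in> SL_o. A $ 2 $ 1 * A $ 3 $ 2 - A $ 2 $ 2 * A $ 3 $ 1 \<noteq> 0}"

definition cell :: "complex^2^2 \<Rightarrow> complex^2^2 \<Rightarrow> complex^2^2 \<Rightarrow> complex^3^3 \<Rightarrow> complex^3^3
    \<Rightarrow> (complex^3^3) set" where
  "cell y1 y2 y3 d u =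
     (\<lambda>g. phi2 (matrix_inv y1) ** phi1 (matrix_inv y2) ** phi2 (matrix_inv y3) ** d ** u ** g)
       ` Gamma_inf3"

definition cell_index :: "complex set \<Rightarrow> (complex \<Rightarrow> complex set) \<Rightarrow>
    ((complex^2^2) \<times> (complex^2^2) \<times> (complex^2^2) \<times> (complex^3^3) \<times> (complex^3^3)) set" where
  "cell_index C R = {(y1, y2, y3, d, u). y1 \<in> Ymat C R \<and> y2 \<in> Ymat C R \<and> y3 \<in> Ymat C R \<and>
      y2 \<noteq> mat 1 \<and> y3 \<noteq> mat 1 \<and> d \<in> D3 \<and> u \<in> U3}"

end

theory Submission
  imports Defs
begin

text \<open>
  Left multiplication by phi2(y1), phi1(y2), phi2(y3) clears successively the entries (3,1),
  (2,1) and (3,2) of A. At each step the required y is an element of Y(o) whose bottom row kills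
  a given column vector of o^2; since o is Euclidean it exists (Bezout), and it is unique for a
  nonzero vector because Y(o) represents the bottom rows of SL_2(o) modulo units, the top left
  entry being fixed modulo c. For A in Delta_{1,1} the nonvanishing lower left minor makes the
  three vectors nonzero and forces y2, y3 to differ from the identity; conversely it is
  recovered from the triangular shape. Finally an upper triangular matrix of SL_3(o) is uniquely
  d u g with d diagonal, u in U(3) and g in Gamma_inf(3), by reducing its off-diagonal entries
  modulo 3.
\<close>

section \<open>The Eisenstein integers\<close>

lemma omega_squared: "omega * omega = -1 - omega"
  by (simp add: omega_def complex_eq_iff field_simps)

lemma Eis_iff: "x \<in> Eis \<longleftrightarrow> (\<exists>a b. x = of_int a + of_int b * omega)"
  by (auto simp: Eis_def)

lemma Eis_coords_unique:
  assumes "of_int a + of_int b * omega = (of_int c + of_int d * omega :: complex)"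
  shows "a = c \<and> b = d"
proof -
  have "Im (of_int a + of_int b * omega) = Im (of_int c + of_int d * omega :: complex)"
    using assms by simp
  then have "b = d" by (simp add: omega_def)
  then show ?thesis using assms by simp
qed

lemma Eis_coordsI [intro]: "of_int a + of_int b * omega \<in> Eis"
  by (auto simp: Eis_def)

lemma Eis_of_int [simp, intro]: "of_int a \<in> Eis"
  using Eis_coordsI[of a 0] by simp

lemma Eis_numeral [simp, intro]: "numeral n \<in> Eis" "0 \<in> Eis" "1 \<in> Eis"
  using Eis_of_int[of "numeral n"] Eis_of_int[of 0] Eis_of_int[of 1] by simp_all

lemma Eis_add [intro]: "x \<in> Eis \<Longrightarrow> y \<in> Eis \<Longrightarrow> x + y \<in> Eis"
proof -
  assume "x \<in> Eis" "y \<in> Eis"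
  then obtain a b c d where "x = of_int a + of_int b * omega" "y = of_int c + of_int d * omega"
    by (auto simp: Eis_iff)
  then have "x + y = of_int (a + c) + of_int (b + d) * omega"
    by (simp add: algebra_simps)
  then show ?thesis by (simp only: Eis_coordsI)
qed

lemma Eis_uminus [intro]: "x \<in> Eis \<Longrightarrow> - x \<in> Eis"
proof -
  assume "x \<in> Eis"
  then obtain a b where "x = of_int a + of_int b * omega"
    by (auto simp: Eis_iff)
  then have "- x = of_int (- a) + of_int (- b) * omega"
    by (simp add: algebra_simps)
  then show ?thesis by (simp only: Eis_coordsI)
qed

lemma Eis_diff [intro]: "x \<in> Eis \<Longrightarrow> y \<in> Eis \<Longrightarrow> x - y \<in> Eis"
  using Eis_add[of x "- y"] Eis_uminus[of y] by simp

lemma Eis_mult [intro]: "x \<in> Eis \<Longrightarrow> y \<in> Eis \<Longrightarrow> x * y \<in> Eis"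
proof -
  assume "x \<in> Eis" "y \<in> Eis"
  then obtain a b c d where xy: "x = of_int a + of_int b * omega" "y = of_int c + of_int d * omega"
    by (auto simp: Eis_iff)
  have "x * y = of_int a * of_int c + (of_int a * of_int d + of_int b * of_int c) * omega
      + of_int b * of_int d * (omega * omega)"
    unfolding xy by (simp add: algebra_simps)
  also have "\<dots> = of_int (a * c - b * d) + of_int (a * d + b * c - b * d) * omega"
    unfolding omega_squared by (simp add: algebra_simps)
  finally show ?thesis by (simp only: Eis_coordsI)
qed

lemma Eis_sum [intro]: "(\<And>i. i \<in> S \<Longrightarrow> f i \<in> Eis) \<Longrightarrow> sum f S \<in> Eis"
  by (induction S rule: infinite_finite_induct) auto

lemma cmod_coords_omega_squared:
  "(cmod (of_real p + of_real q * omega))\<^sup>2 = p\<^sup>2 - p * q + q\<^sup>2"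
proof -
  have "of_real p + of_real q * omega = Complex (p - q / 2) (q * sqrt 3 / 2)"
    by (simp add: omega_def complex_eq_iff)
  then show ?thesis unfolding cmod_power2 by (simp add: power2_eq_square field_simps)
qed

lemma Eis_norm_squared_nat: "x \<in> Eis \<Longrightarrow> (cmod x)\<^sup>2 \<in> \<nat>"
proof -
  assume "x \<in> Eis"
  then obtain a b where "x = of_real (of_int a) + of_real (of_int b) * omega"
    by (auto simp: Eis_iff)
  then have "(cmod x)\<^sup>2 = of_int (a\<^sup>2 - a * b + b\<^sup>2)"
    by (simp only: cmod_coords_omega_squared) simp
  moreover have "4 * (a\<^sup>2 - a * b + b\<^sup>2) = (2 * a - b)\<^sup>2 + 3 * b\<^sup>2"
    by (simp add: algebra_simps power2_eq_square)
  then have "a\<^sup>2 - a * b + b\<^sup>2 \<ge> 0"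
    by (smt (verit) zero_le_power2)
  ultimately have "(cmod x)\<^sup>2 = of_nat (nat (a\<^sup>2 - a * b + b\<^sup>2))"
    by (simp only: of_nat_nat)
  then show ?thesis by (simp only: of_nat_in_Nats)
qed

text \<open>Rounding both coordinates in the basis 1, omega leaves a remainder of norm at most sqrt 3 / 2.\<close>
lemma Eis_nearby: "\<exists>q\<in>Eis. cmod (z - q) < 1"
proof -
  define t where "t = Im z * 2 / sqrt 3"
  define s where "s = Re z + t / 2"
  define m where "m = round s"
  define n where "n = round t"
  have "z - (of_int m + of_int n * omega) = of_real (s - m) + of_real (t - n) * omega"
    by (simp add: omega_def complex_eq_iff s_def t_def field_simps)
  then have "(cmod (z - (of_int m + of_int n * omega)))\<^sup>2 = (s - m)\<^sup>2 - (s - m) * (t - n) + (t - n)\<^sup>2"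
    by (simp only: cmod_coords_omega_squared)
  also have "\<dots> < 1"
  proof -
    have sm: "\<bar>s - m\<bar> \<le> 1/2" and tn: "\<bar>t - n\<bar> \<le> 1/2"
      unfolding m_def n_def using of_int_round_abs_le by (simp_all add: abs_minus_commute)
    have "\<bar>s - m\<bar> * \<bar>t - n\<bar> \<le> 1/2 * (1/2)" "\<bar>s - m\<bar> * \<bar>s - m\<bar> \<le> 1/2 * (1/2)"
        "\<bar>t - n\<bar> * \<bar>t - n\<bar> \<le> 1/2 * (1/2)"
      by (rule mult_mono; use sm tn in simp)+
    moreover have "- ((s - m) * (t - n)) \<le> \<bar>s - m\<bar> * \<bar>t - n\<bar>"
      by (simp only: abs_mult[symmetric] abs_ge_minus_self)
    ultimately show ?thesis
      by (simp only: power2_eq_square abs_mult_self_eq)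
  qed
  finally have "cmod (z - (of_int m + of_int n * omega)) < 1"
    by (simp add: power_less_one_iff)
  then show ?thesis by (auto simp: Eis_iff)
qed

definition Eis_dvd :: "complex \<Rightarrow> complex \<Rightarrow> bool" where
  "Eis_dvd c x \<longleftrightarrow> (\<exists>z\<in>Eis. x = c * z)"

lemma Eis_division:
  assumes "x \<in> Eis" "y \<in> Eis" "y \<noteq> 0"
  shows "\<exists>q\<in>Eis. cmod (x - q * y) < cmod y"
proof -
  obtain q where q: "q \<in> Eis" "cmod (x / y - q) < 1"
    using Eis_nearby by blast
  have "x - q * y = y * (x / y - q)"
    using assms(3) by (simp add: field_simps)
  then have "cmod (x - q * y) = cmod y * cmod (x / y - q)"
    by (simp add: norm_mult)
  also have "\<dots> < cmod y"
    using q(2) assms(3) by simp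
  finally show ?thesis using q(1) by blast
qed

lemma Eis_bezout:
  assumes "x \<in> Eis" "y \<in> Eis"
  obtains g s t where "s \<in> Eis" "t \<in> Eis" "g = s * x + t * y" "Eis_dvd g x" "Eis_dvd g y"
proof -
  obtain n where "(cmod y)\<^sup>2 = of_nat n"
    using Eis_norm_squared_nat[OF assms(2)] Nats_cases by blast
  then have "\<exists>g s t. s \<in> Eis \<and> t \<in> Eis \<and> g = s * x + t * y \<and> Eis_dvd g x \<and> Eis_dvd g y"
    using assms
  proof (induction n arbitrary: x y rule: less_induct)
    case (less n)
    show ?case
    proof (cases "y = 0")
      case True
      have "Eis_dvd x x" "Eis_dvd x 0"
        by (auto simp: Eis_dvd_def intro: bexI[of _ 1] bexI[of _ 0])
      then show ?thesis
        using True by (intro exI[of _ x] exI[of _ 1] exI[of _ 0]) simp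
    next
      case False
      obtain q where q: "q \<in> Eis" "cmod (x - q * y) < cmod y"
        using Eis_division less.prems False by blast
      define r where "r = x - q * y"
      have r: "r \<in> Eis" unfolding r_def using less.prems q by auto
      obtain m where m: "(cmod r)\<^sup>2 = of_nat m"
        using Eis_norm_squared_nat[OF r] Nats_cases by blast
      have "(cmod r)\<^sup>2 < (cmod y)\<^sup>2"
        using q(2) by (simp add: r_def power_strict_mono)
      then have "m < n" using m less.prems(1) by simp
      then obtain g s t where g: "s \<in> Eis" "t \<in> Eis" "g = s * y + t * r" "Eis_dvd g y" "Eis_dvd g r"
        using less.IH[OF _ m less.prems(3) r] by auto
      obtain y' r' where y'r': "y' \<in> Eis" "r' \<in> Eis" "y = g * y'" "r = g * r'"
        using g(4,5) unfolding Eis_dvd_def by blast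
      have "x = r + q * y" by (simp add: r_def)
      also have "\<dots> = g * (q * y' + r')" by (simp add: y'r'(3,4) algebra_simps)
      finally have "Eis_dvd g x"
        unfolding Eis_dvd_def using y'r'(1,2) q(1) by blast
      moreover have "g = t * x + (s - t * q) * y"
        unfolding g(3) r_def by (simp add: algebra_simps)
      moreover have "s - t * q \<in> Eis" using g(1,2) q(1) by blast
      ultimately show ?thesis using g(2,4) by blast
    qed
  qed
  then show ?thesis using that by blast
qed

lemma Eis_SL2_bottom_row_kills:
  assumes "v1 \<in> Eis" "v2 \<in> Eis"
  obtains a b c d where "a \<in> Eis" "b \<in> Eis" "c \<in> Eis" "d \<in> Eis" "a * d - b * c = 1"
    "c * v1 + d * v2 = 0"
proof -
  obtain g s t where g: "s \<in> Eis" "t \<in> Eis" "g = s * v1 + t * v2" "Eis_dvd g v1" "Eis_dvd g v2"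
    using Eis_bezout[OF assms] .
  obtain x y where xy: "x \<in> Eis" "y \<in> Eis" "v1 = g * x" "v2 = g * y"
    using g(4,5) unfolding Eis_dvd_def by blast
  show ?thesis
  proof (cases "g = 0")
    case True
    show ?thesis by (rule that[of 1 0 0 1]) (simp_all add: xy True)
  next
    case False
    have "g * (s * x + t * y) = s * v1 + t * v2"
      by (simp add: xy(3,4) algebra_simps)
    then have "g * (s * x + t * y) = g * 1"
      using g(3) by simp
    then have "s * x + t * y = 1" using False by simp
    show ?thesis
    proof (rule that[of "- s" "- t" y "- x"])
      show "- s * - x - - t * y = 1" by (simp add: \<open>s * x + t * y = 1\<close>)
      show "y * v1 + - x * v2 = 0" by (simp add: xy(3,4))
    qed (use g(1,2) xy(1,2) in auto)
  qed
qed

lemma Eis_units_inverse: "u \<in> Eis_units \<Longrightarrow> \<exists>v\<in>Eis. u * v = 1"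
  by (simp add: Eis_units_def)

lemma Eis_units_Eis: "u \<in> Eis_units \<Longrightarrow> u \<in> Eis"
  by (simp add: Eis_units_def)

lemma one_Eis_units: "1 \<in> Eis_units"
  unfolding Eis_units_def by (auto intro: bexI[of _ 1])

lemma assoc_reps_exists:
  assumes "assoc_reps C" "x \<in> Eis" "x \<noteq> 0"
  shows "\<exists>c\<in>C. \<exists>u\<in>Eis_units. x = u * c"
proof -
  have "\<exists>!c. c \<in> C \<and> (\<exists>u\<in>Eis_units. x = u * c)"
    using assms by (simp add: assoc_reps_def)
  then show ?thesis by blast
qed

lemma assoc_reps_unique:
  assumes "assoc_reps C" "c \<in> C" "c' \<in> C" "u \<in> Eis_units" "c' = u * c"
  shows "c = c'"
proof -
  have "c' \<in> Eis - {0}" using assms(1,3) by (auto simp: assoc_reps_def)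
  moreover have "c' = 1 * c'" by simp
  ultimately show ?thesis
    using assms one_Eis_units unfolding assoc_reps_def by blast
qed

lemma residue_reps_exists:
  assumes "residue_reps c A" "x \<in> Eis"
  shows "\<exists>a\<in>A. Eis_dvd c (x - a)"
proof -
  have "\<exists>!a. a \<in> A \<and> (\<exists>z\<in>Eis. x - a = c * z)"
    using assms by (simp add: residue_reps_def)
  then show ?thesis unfolding Eis_dvd_def by blast
qed

lemma residue_reps_unique:
  assumes "residue_reps c A" "a \<in> A" "a' \<in> A" "Eis_dvd c (a - a')"
  shows "a = a'"
proof -
  have "a \<in> Eis" using assms(1,2) by (auto simp: residue_reps_def)
  then have "\<exists>!b. b \<in> A \<and> (\<exists>z\<in>Eis. a - b = c * z)"
    using assms(1) by (simp add: residue_reps_def)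
  moreover have "\<exists>z\<in>Eis. a - a = c * z"
    by (auto intro: bexI[of _ 0])
  ultimately show ?thesis
    using assms(2-4) unfolding Eis_dvd_def by blast
qed

lemma residue_reps_3_R9: "residue_reps 3 R9"
  unfolding residue_reps_def
proof (intro conjI ballI)
  show "R9 \<subseteq> Eis" by (auto simp: R9_def)
next
  fix x assume "x \<in> Eis"
  then obtain m n where x: "x = of_int m + of_int n * omega" by (auto simp: Eis_iff)
  define r where "r = of_int (m mod 3) + of_int (n mod 3) * omega"
  have "m mod 3 \<in> {0, 1, 2}" "n mod 3 \<in> {0, 1, 2}" by auto
  then have "r \<in> R9"
    unfolding R9_def r_def mem_Collect_eq by (intro exI[of _ "m mod 3"] exI[of _ "n mod 3"]) simp
  moreover have "of_int (m div 3) + of_int (n div 3) * omega \<in> Eis" ..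
  moreover have "x - r = 3 * (of_int (m div 3) + of_int (n div 3) * omega)"
  proof -
    have "(of_int m :: complex) = 3 * of_int (m div 3) + of_int (m mod 3)"
      "(of_int n :: complex) = 3 * of_int (n div 3) + of_int (n mod 3)"
      by (metis div_mult_mod_eq mult.commute of_int_add of_int_mult of_int_numeral)+
    then show ?thesis unfolding x r_def by (simp add: algebra_simps)
  qed
  moreover have "r' = r" if r'z: "r' \<in> R9" "z \<in> Eis" "x - r' = 3 * z" for r' z
  proof -
    obtain m' n' where r': "r' = of_int m' + of_int n' * omega" "m' \<in> {0, 1, 2}" "n' \<in> {0, 1, 2}"
      using r'z(1) unfolding R9_def by blast
    obtain p q where z: "z = of_int p + of_int q * omega"
      using r'z(2) by (auto simp: Eis_iff)
    have "of_int (m - m') + of_int (n - n') * omega = (of_int (3 * p) + of_int (3 * q) * omega :: complex)"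
      using r'z(3) unfolding x r' z by (simp add: algebra_simps)
    then have "m - m' = 3 * p" "n - n' = 3 * q"
      using Eis_coords_unique by blast+
    moreover have "0 \<le> m'" "m' < 3" "0 \<le> n'" "n' < 3"
      using r'(2,3) by auto
    ultimately have "m' = m mod 3" "n' = n mod 3"
      by presburger+
    then show ?thesis by (simp add: r' r_def)
  qed
  ultimately show "\<exists>!a. a \<in> R9 \<and> (\<exists>z\<in>Eis. x - a = 3 * z)"
    by (intro ex1I[of _ r]) blast+
qed

section \<open>The representatives Y(o)\<close>

lemma SL_o_entry: "A \<in> SL_o \<Longrightarrow> A $ i $ j \<in> Eis"
  by (simp add: SL_o_def)

lemma SL_o_det: "A \<in> SL_o \<Longrightarrow> det A = 1"
  by (simp add: SL_o_def)

lemma mat2_eq_iff: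
  "(X :: 'a^2^2) = Y \<longleftrightarrow> X$1$1 = Y$1$1 \<and> X$1$2 = Y$1$2 \<and> X$2$1 = Y$2$1 \<and> X$2$2 = Y$2$2"
  by (auto simp: vec_eq_iff forall_2)

lemma mat1_2_entries [simp]:
  "(mat 1 :: 'a::zero_neq_one^2^2) $ 1 $ 1 = 1" "(mat 1 :: 'a^2^2) $ 1 $ 2 = 0"
  "(mat 1 :: 'a^2^2) $ 2 $ 1 = 0" "(mat 1 :: 'a^2^2) $ 2 $ 2 = 1"
  by (simp_all add: mat_def)

definition clears :: "complex^2^2 \<Rightarrow> complex \<Rightarrow> complex \<Rightarrow> bool" where
  "clears y v1 v2 \<longleftrightarrow> y $ 2 $ 1 * v1 + y $ 2 $ 2 * v2 = 0"

lemma clears_mat1 [simp]: "clears (mat 1) v1 v2 \<longleftrightarrow> v2 = 0"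
  by (simp add: clears_def)

lemma clears_proportional_rows:
  assumes "clears y v1 v2" "clears y' v1 v2" "v1 \<noteq> 0 \<or> v2 \<noteq> 0"
  shows "y $ 2 $ 1 * y' $ 2 $ 2 = y' $ 2 $ 1 * y $ 2 $ 2"
proof -
  let ?D = "y $ 2 $ 1 * y' $ 2 $ 2 - y' $ 2 $ 1 * y $ 2 $ 2"
  have "?D * v1 = y' $ 2 $ 2 * (y $ 2 $ 1 * v1 + y $ 2 $ 2 * v2)
      - y $ 2 $ 2 * (y' $ 2 $ 1 * v1 + y' $ 2 $ 2 * v2)"
    "?D * v2 = y $ 2 $ 1 * (y' $ 2 $ 1 * v1 + y' $ 2 $ 2 * v2)
      - y' $ 2 $ 1 * (y $ 2 $ 1 * v1 + y $ 2 $ 2 * v2)"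
    by (simp_all add: algebra_simps)
  then have "?D * v1 = 0" "?D * v2 = 0"
    using assms(1,2) by (simp_all add: clears_def)
  then show ?thesis using assms(3) by auto
qed

lemma SL2_proportional_rows_unit:
  assumes "a \<in> Eis" "b \<in> Eis" "a' \<in> Eis" "b' \<in> Eis" "c \<in> Eis" "d \<in> Eis" "c' \<in> Eis" "d' \<in> Eis"
    and det: "a * d - b * c = 1" "a' * d' - b' * c' = 1"
    and rows: "c * d' = c' * d"
  shows "\<exists>u\<in>Eis_units. c' = u * c \<and> d' = u * d"
proof -
  define l where "l = a * d' - b * c'"
  define m where "m = a' * d - b' * c"
  have "l * c = c' * (a * d - b * c)" "l * d = d' * (a * d - b * c)"
    unfolding l_def using rows by (simp_all add: algebra_simps)
  then have l: "l * c = c'" "l * d = d'" using det(1) by simp_all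
  have "m * c' = c * (a' * d' - b' * c')" "m * d' = d * (a' * d' - b' * c')"
    unfolding m_def using rows by (simp_all add: algebra_simps)
  then have m: "m * c' = c" "m * d' = d" using det(2) by simp_all
  have "(l * m - 1) * c = m * (l * c) - c" "(l * m - 1) * d = m * (l * d) - d"
    by (simp_all add: algebra_simps)
  then have "(l * m - 1) * c = 0" "(l * m - 1) * d = 0"
    by (simp_all add: l m)
  moreover have "c \<noteq> 0 \<or> d \<noteq> 0" using det(1) by auto
  ultimately have "l * m - 1 = 0" by (metis mult_eq_0_iff)
  then have "l * m = 1" by simp
  moreover have "l \<in> Eis" "m \<in> Eis" unfolding l_def m_def using assms(1-8) by auto
  ultimately show ?thesis using l unfolding Eis_units_def by force
qed

lemma Ymat_SL_o: "y \<in> Ymat C R \<Longrightarrow> y \<in> SL_o"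
  by (auto simp: Ymat_def SL_o_def forall_2 det_2)

lemma Ymat_eq_mat1_iff: "assoc_reps C \<Longrightarrow> y \<in> Ymat C R \<Longrightarrow> y = mat 1 \<longleftrightarrow> y $ 2 $ 1 = 0"
  by (auto simp: Ymat_def assoc_reps_def)

lemma Ymat_exists_bottom_row:
  assumes C: "assoc_reps C" and R: "\<forall>c\<in>C. residue_reps c (R c)"
    and abcd: "a \<in> Eis" "b \<in> Eis" "c \<in> Eis" "d \<in> Eis" "a * d - b * c = 1" and "c \<noteq> 0"
  shows "\<exists>y\<in>Ymat C R. \<exists>u\<in>Eis_units. y $ 2 $ 1 = u * c \<and> y $ 2 $ 2 = u * d"
proof -
  obtain c' w where c': "c' \<in> C" "w \<in> Eis_units" "c = w * c'"
    using assoc_reps_exists[OF C] abcd(3) \<open>c \<noteq> 0\<close> by blast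
  obtain u where u: "u \<in> Eis" "w * u = 1"
    using Eis_units_inverse[OF c'(2)] by blast
  have w: "w \<in> Eis" using c'(2) by (rule Eis_units_Eis)
  have uU: "u \<in> Eis_units" using u w unfolding Eis_units_def by (auto simp: mult.commute)
  have c'_eq: "c' = u * c" using c'(3) u(2) by (simp add: algebra_simps)
  define d' where "d' = u * d"
  obtain a' z where a': "a' \<in> R c'" "z \<in> Eis" "w * a - a' = c' * z"
    using residue_reps_exists[of c' "R c'" "w * a"] R c'(1) abcd(1) w
    unfolding Eis_dvd_def by blast
  define b' where "b' = w * b - d' * z"
  have "a' * d' - b' * c' = (w * u) * (a * d - b * c) + (c' * z - (w * a - a')) * d'"
    unfolding b'_def d'_def c'_eq by (simp add: algebra_simps)
  then have det: "a' * d' - b' * c' = 1" using abcd(5) u(2) a'(3) by simp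
  define y :: "complex^2^2" where "y = vector [vector [a', b'], vector [c', d']]"
  have "a' \<in> Eis" using R c'(1) a'(1) by (auto simp: residue_reps_def)
  moreover have "b' \<in> Eis" "c' \<in> Eis" "d' \<in> Eis"
    unfolding b'_def d'_def c'_eq using abcd a'(2) u(1) w by auto
  ultimately have "y \<in> SL_o"
    using det by (simp add: SL_o_def y_def forall_2 det_2 mult.commute)
  then have "y \<in> Ymat C R" using c'(1) a'(1) by (simp add: Ymat_def y_def)
  moreover have "y $ 2 $ 1 = u * c \<and> y $ 2 $ 2 = u * d" by (simp add: y_def c'_eq d'_def)
  ultimately show ?thesis using uU by blast
qed

lemma Ymat_unique_bottom_row:
  assumes C: "assoc_reps C" and R: "\<forall>c\<in>C. residue_reps c (R c)"
    and y: "y \<in> Ymat C R" and y': "y' \<in> Ymat C R"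
    and u: "u \<in> Eis_units" "y' $ 2 $ 1 = u * y $ 2 $ 1" "y' $ 2 $ 2 = u * y $ 2 $ 2"
  shows "y = y'"
proof (cases "y $ 2 $ 1 = 0")
  case True
  moreover have "y' $ 2 $ 1 = 0" using u(2) True by simp
  ultimately show ?thesis using Ymat_eq_mat1_iff[OF C y] Ymat_eq_mat1_iff[OF C y'] by simp
next
  case False
  then have ne: "y \<noteq> mat 1" "y' \<noteq> mat 1"
    using u Ymat_eq_mat1_iff[OF C] y y' by (auto simp: Eis_units_def)
  define a b c d where "a = y $ 1 $ 1" "b = y $ 1 $ 2" "c = y $ 2 $ 1" "d = y $ 2 $ 2"
  define a' b' c' d' where "a' = y' $ 1 $ 1" "b' = y' $ 1 $ 2" "c' = y' $ 2 $ 1" "d' = y' $ 2 $ 2"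
  have reps: "c \<in> C" "a \<in> R c" "c' \<in> C" "a' \<in> R c'"
    using y y' ne by (auto simp: Ymat_def a_b_c_d_def a'_b'_c'_d'_def)
  have SL: "y \<in> SL_o" "y' \<in> SL_o" using y y' by (simp_all add: Ymat_SL_o)
  have det: "a * d - b * c = 1" "a' * d' - b' * c' = 1"
    using SL_o_det[OF SL(1)] SL_o_det[OF SL(2)] by (simp_all add: det_2 a_b_c_d_def a'_b'_c'_d'_def)
  have Eis: "a \<in> Eis" "b \<in> Eis" "a' \<in> Eis" "b' \<in> Eis"
    using SL by (simp_all add: SL_o_entry a_b_c_d_def a'_b'_c'_d'_def)
  have "c = c'"
    using assoc_reps_unique[OF C reps(1,3) u(1)] u(2) by (simp add: a_b_c_d_def a'_b'_c'_d'_def)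
  then have "u = 1" using u(2) False by (simp add: a_b_c_d_def a'_b'_c'_d'_def)
  then have dd: "d = d'" using u(3) by (simp add: a_b_c_d_def a'_b'_c'_d'_def)
  have det': "a' * d - b' * c = 1" using det(2) \<open>c = c'\<close> dd by simp
  have "a - a' = a * (a' * d - b' * c) - a' * (a * d - b * c)"
    using det(1) det' by simp
  also have "\<dots> = c * (a' * b - a * b')"
    by (simp add: algebra_simps)
  finally have "Eis_dvd c (a - a')"
    unfolding Eis_dvd_def using Eis by blast
  then have aa: "a = a'"
    using residue_reps_unique[of c "R c"] R reps \<open>c = c'\<close> by blast
  then have "(b - b') * c = 0"
    using det(1) det' by (simp add: algebra_simps)
  then have "b = b'" using False by (simp add: a_b_c_d_def)
  then show ?thesis
    using aa \<open>c = c'\<close> dd by (simp add: mat2_eq_iff a_b_c_d_def a'_b'_c'_d'_def)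
qed

lemma Ymat_clears_exists:
  assumes C: "assoc_reps C" and R: "\<forall>c\<in>C. residue_reps c (R c)"
    and v: "v1 \<in> Eis" "v2 \<in> Eis"
  shows "\<exists>y\<in>Ymat C R. clears y v1 v2"
proof (cases "v2 = 0")
  case True
  then show ?thesis by (auto simp: Ymat_def)
next
  case False
  obtain a b c d where abcd: "a \<in> Eis" "b \<in> Eis" "c \<in> Eis" "d \<in> Eis" "a * d - b * c = 1"
      "c * v1 + d * v2 = 0"
    using Eis_SL2_bottom_row_kills[OF v] .
  have "c \<noteq> 0" using abcd(5,6) False by auto
  then obtain y u where y: "y \<in> Ymat C R" "y $ 2 $ 1 = u * c" "y $ 2 $ 2 = u * d"
    using Ymat_exists_bottom_row[OF C R abcd(1-5)] by blast
  have "y $ 2 $ 1 * v1 + y $ 2 $ 2 * v2 = u * (c * v1 + d * v2)"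
    by (simp add: y(2,3) algebra_simps)
  then have "clears y v1 v2" using abcd(6) by (simp add: clears_def)
  then show ?thesis using y(1) by blast
qed

lemma Ymat_clears_unique:
  assumes C: "assoc_reps C" and R: "\<forall>c\<in>C. residue_reps c (R c)"
    and y: "y \<in> Ymat C R" "clears y v1 v2" and y': "y' \<in> Ymat C R" "clears y' v1 v2"
    and v: "v1 \<noteq> 0 \<or> v2 \<noteq> 0"
  shows "y = y'"
proof -
  have SL: "y \<in> SL_o" "y' \<in> SL_o" using y(1) y'(1) by (simp_all add: Ymat_SL_o)
  have "\<exists>u\<in>Eis_units. y' $ 2 $ 1 = u * y $ 2 $ 1 \<and> y' $ 2 $ 2 = u * y $ 2 $ 2"
  proof (rule SL2_proportional_rows_unit)
    show "y $ 1 $ 1 * y $ 2 $ 2 - y $ 1 $ 2 * y $ 2 $ 1 = 1"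
      "y' $ 1 $ 1 * y' $ 2 $ 2 - y' $ 1 $ 2 * y' $ 2 $ 1 = 1"
      using SL_o_det[OF SL(1)] SL_o_det[OF SL(2)] by (simp_all add: det_2)
    show "y $ 2 $ 1 * y' $ 2 $ 2 = y' $ 2 $ 1 * y $ 2 $ 2"
      using clears_proportional_rows[OF y(2) y'(2) v] .
  qed (use SL in \<open>simp_all add: SL_o_entry\<close>)
  then show ?thesis using Ymat_unique_bottom_row[OF C R y(1) y'(1)] by blast
qed

section \<open>Embeddings of SL_2 into SL_3\<close>

lemma M3_entries [simp]:
  "M3 a11 a12 a13 a21 a22 a23 a31 a32 a33 $ 1 $ 1 = a11"
  "M3 a11 a12 a13 a21 a22 a23 a31 a32 a33 $ 1 $ 2 = a12"
  "M3 a11 a12 a13 a21 a22 a23 a31 a32 a33 $ 1 $ 3 = a13"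
  "M3 a11 a12 a13 a21 a22 a23 a31 a32 a33 $ 2 $ 1 = a21"
  "M3 a11 a12 a13 a21 a22 a23 a31 a32 a33 $ 2 $ 2 = a22"
  "M3 a11 a12 a13 a21 a22 a23 a31 a32 a33 $ 2 $ 3 = a23"
  "M3 a11 a12 a13 a21 a22 a23 a31 a32 a33 $ 3 $ 1 = a31"
  "M3 a11 a12 a13 a21 a22 a23 a31 a32 a33 $ 3 $ 2 = a32"
  "M3 a11 a12 a13 a21 a22 a23 a31 a32 a33 $ 3 $ 3 = a33"
  by (simp_all add: M3_def)

lemma mat3_eq_iff:
  "(X :: 'a^3^3) = Y \<longleftrightarrow> X$1$1 = Y$1$1 \<and> X$1$2 = Y$1$2 \<and> X$1$3 = Y$1$3 \<and>
     X$2$1 = Y$2$1 \<and> X$2$2 = Y$2$2 \<and> X$2$3 = Y$2$3 \<and> X$3$1 = Y$3$1 \<and> X$3$2 = Y$3$2 \<and> X$3$3 = Y$3$3"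
  by (auto simp: vec_eq_iff forall_3)

lemma mat1_3_entries [simp]:
  "(mat 1 :: 'a::zero_neq_one^3^3) $ 1 $ 1 = 1" "(mat 1 :: 'a^3^3) $ 1 $ 2 = 0"
  "(mat 1 :: 'a^3^3) $ 1 $ 3 = 0" "(mat 1 :: 'a^3^3) $ 2 $ 1 = 0"
  "(mat 1 :: 'a^3^3) $ 2 $ 2 = 1" "(mat 1 :: 'a^3^3) $ 2 $ 3 = 0"
  "(mat 1 :: 'a^3^3) $ 3 $ 1 = 0" "(mat 1 :: 'a^3^3) $ 3 $ 2 = 0"
  "(mat 1 :: 'a^3^3) $ 3 $ 3 = 1"
  by (simp_all add: mat_def)

lemma matrix_mult_entry_2:
  "((X :: 'a::semiring_1^2^2) ** Y) $ i $ j = X$i$1 * Y$1$j + X$i$2 * Y$2$j"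
  by (simp add: matrix_matrix_mult_def sum_2)

lemma matrix_mult_entry_3:
  "((X :: 'a::semiring_1^3^3) ** Y) $ i $ j = X$i$1 * Y$1$j + X$i$2 * Y$2$j + X$i$3 * Y$3$j"
  by (simp add: matrix_matrix_mult_def sum_3)

lemma phi1_entries [simp]:
  "phi1 y $ 1 $ 1 = y$1$1" "phi1 y $ 1 $ 2 = y$1$2" "phi1 y $ 1 $ 3 = 0"
  "phi1 y $ 2 $ 1 = y$2$1" "phi1 y $ 2 $ 2 = y$2$2" "phi1 y $ 2 $ 3 = 0"
  "phi1 y $ 3 $ 1 = 0" "phi1 y $ 3 $ 2 = 0" "phi1 y $ 3 $ 3 = 1"
  by (simp_all add: phi1_def)

lemma phi2_entries [simp]:
  "phi2 y $ 1 $ 1 = 1" "phi2 y $ 1 $ 2 = 0" "phi2 y $ 1 $ 3 = 0"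
  "phi2 y $ 2 $ 1 = 0" "phi2 y $ 2 $ 2 = y$1$1" "phi2 y $ 2 $ 3 = y$1$2"
  "phi2 y $ 3 $ 1 = 0" "phi2 y $ 3 $ 2 = y$2$1" "phi2 y $ 3 $ 3 = y$2$2"
  by (simp_all add: phi2_def)

lemma phi1_mult: "phi1 (x ** y) = phi1 x ** phi1 y"
  by (simp add: mat3_eq_iff matrix_mult_entry_2 matrix_mult_entry_3)

lemma phi2_mult: "phi2 (x ** y) = phi2 x ** phi2 y"
  by (simp add: mat3_eq_iff matrix_mult_entry_2 matrix_mult_entry_3)

lemma phi1_mat1: "phi1 (mat 1) = mat 1"
  by (simp add: mat3_eq_iff)

lemma phi2_mat1: "phi2 (mat 1) = mat 1"
  by (simp add: mat3_eq_iff)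

lemma det_phi1: "det (phi1 y) = det y"
  by (simp add: det_3 det_2)

lemma det_phi2: "det (phi2 y) = det y"
  by (simp add: det_3 det_2 algebra_simps)

lemma SL_o_mult:
  assumes "A \<in> SL_o" "B \<in> SL_o"
  shows "A ** B \<in> SL_o"
proof -
  have "(A ** B) $ i $ j \<in> Eis" for i j
    using assms unfolding SL_o_def matrix_matrix_mult_def by (auto intro!: Eis_sum)
  moreover have "det (A ** B) = 1"
    using assms by (simp add: SL_o_def det_mul)
  ultimately show ?thesis by (simp add: SL_o_def)
qed

lemma phi1_SL_o: "y \<in> SL_o \<Longrightarrow> phi1 y \<in> SL_o"
  by (simp add: SL_o_def forall_3 det_phi1)

lemma phi2_SL_o: "y \<in> SL_o \<Longrightarrow> phi2 y \<in> SL_o"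
  by (simp add: SL_o_def forall_3 det_phi2)

lemma matrix_inv_eqI:
  fixes A :: "'a::semiring_1^'n^'n"
  assumes "A ** B = mat 1" "B ** A = mat 1"
  shows "matrix_inv A = B"
proof -
  have inv: "A ** matrix_inv A = mat 1 \<and> matrix_inv A ** A = mat 1"
    unfolding matrix_inv_def by (rule someI[where x = B]) (simp add: assms)
  have "matrix_inv A = (B ** A) ** matrix_inv A" using assms(2) by simp
  also have "\<dots> = B" using inv by (simp flip: matrix_mul_assoc)
  finally show ?thesis .
qed

lemma matrix_inv_SL2:
  fixes y :: "'a::comm_ring_1^2^2"
  assumes "det y = 1"
  shows "matrix_inv y = vector [vector [y$2$2, - y$1$2], vector [- y$2$1, y$1$1]]"
  using assms by (intro matrix_inv_eqI) (simp_all add: mat2_eq_iff matrix_mult_entry_2 det_2 algebra_simps)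

lemma SL2_matrix_inv_SL_o: "(y :: complex^2^2) \<in> SL_o \<Longrightarrow> matrix_inv y \<in> SL_o"
  by (auto simp: SL_o_def matrix_inv_SL2 forall_2 det_2 algebra_simps)

lemma SL2_mult_matrix_inv:
  fixes y :: "'a::comm_ring_1^2^2"
  assumes "det y = 1"
  shows "y ** matrix_inv y = mat 1" "matrix_inv y ** y = mat 1"
  using assms by (simp_all add: matrix_inv_SL2 mat2_eq_iff matrix_mult_entry_2 det_2 algebra_simps)

lemma phi1_cancel:
  assumes "det y = 1"
  shows "phi1 y ** (phi1 (matrix_inv y) ** X) = X" "phi1 (matrix_inv y) ** (phi1 y ** X) = X"
  by (simp_all add: matrix_mul_assoc flip: phi1_mult add: SL2_mult_matrix_inv[OF assms] phi1_mat1)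

lemma phi2_cancel:
  assumes "det y = 1"
  shows "phi2 y ** (phi2 (matrix_inv y) ** X) = X" "phi2 (matrix_inv y) ** (phi2 y ** X) = X"
  by (simp_all add: matrix_mul_assoc flip: phi2_mult add: SL2_mult_matrix_inv[OF assms] phi2_mat1)

section \<open>Upper triangular matrices in SL_3(o)\<close>

definition upper_triangular :: "complex^3^3 \<Rightarrow> bool" where
  "upper_triangular X \<longleftrightarrow> X $ 2 $ 1 = 0 \<and> X $ 3 $ 1 = 0 \<and> X $ 3 $ 2 = 0"

lemma Gamma_inf3_iff:
  "g \<in> Gamma_inf3 \<longleftrightarrow> (\<exists>a\<in>Eis. \<exists>b\<in>Eis. \<exists>c\<in>Eis. g = M3 1 (3 * a) (3 * b) 0 1 (3 * c) 0 0 1)"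
proof
  assume g: "g \<in> Gamma_inf3"
  then have G: "\<forall>i j. \<exists>z\<in>Eis. g $ i $ j - (if i = j then 1 else 0) = 3 * z"
    by (simp add: Gamma_inf3_def Gamma3_def)
  obtain a b c where "a \<in> Eis" "g $ 1 $ 2 = 3 * a" "b \<in> Eis" "g $ 1 $ 3 = 3 * b"
      "c \<in> Eis" "g $ 2 $ 3 = 3 * c"
    using G[rule_format, of 1 2] G[rule_format, of 1 3] G[rule_format, of 2 3] by auto
  with g show "\<exists>a\<in>Eis. \<exists>b\<in>Eis. \<exists>c\<in>Eis. g = M3 1 (3 * a) (3 * b) 0 1 (3 * c) 0 0 1"
    by (auto simp: Gamma_inf3_def mat3_eq_iff)
next
  assume "\<exists>a\<in>Eis. \<exists>b\<in>Eis. \<exists>c\<in>Eis. g = M3 1 (3 * a) (3 * b) 0 1 (3 * c) 0 0 1"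
  then obtain a b c where abc: "a \<in> Eis" "b \<in> Eis" "c \<in> Eis"
      and g: "g = M3 1 (3 * a) (3 * b) 0 1 (3 * c) 0 0 1"
    by blast
  have "g \<in> SL_o" unfolding SL_o_def g using abc by (simp add: forall_3 det_3 Eis_mult)
  moreover have "\<forall>i j. \<exists>z\<in>Eis. g $ i $ j - (if i = j then 1 else 0) = 3 * z"
    unfolding g forall_3 using abc by (auto intro: bexI[of _ 0])
  ultimately show "g \<in> Gamma_inf3" by (simp add: Gamma_inf3_def Gamma3_def g)
qed

lemma diagonal_unipotent_mult:
  "M3 i 0 0 0 j 0 0 0 k ** (M3 1 x y 0 1 z 0 0 1 ** M3 1 x' y' 0 1 z' 0 0 1)
     = M3 i (i * (x + x')) (i * (y + x * z' + y')) 0 j (j * (z + z')) 0 0 k"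
  by (simp add: mat3_eq_iff matrix_mult_entry_3 algebra_simps)

lemma D3_U3_Gamma_inf3_cases:
  assumes "d \<in> D3" "u \<in> U3" "g \<in> Gamma_inf3"
  obtains i j k \<alpha> \<beta> \<gamma> a b c where "i \<in> Eis" "j \<in> Eis" "k \<in> Eis" "i * j * k = 1"
    "\<alpha> \<in> R9" "\<beta> \<in> R9" "\<gamma> \<in> R9" "a \<in> Eis" "b \<in> Eis" "c \<in> Eis"
    "d = M3 i 0 0 0 j 0 0 0 k" "u = M3 1 \<alpha> \<beta> 0 1 \<gamma> 0 0 1"
    "g = M3 1 (3 * a) (3 * b) 0 1 (3 * c) 0 0 1"
proof -
  obtain i j k where "i \<in> Eis" "j \<in> Eis" "k \<in> Eis" "i * j * k = 1" "d = M3 i 0 0 0 j 0 0 0 k"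
    using assms(1) unfolding D3_def by blast
  moreover obtain \<alpha> \<beta> \<gamma> where "\<alpha> \<in> R9" "\<beta> \<in> R9" "\<gamma> \<in> R9" "u = M3 1 \<alpha> \<beta> 0 1 \<gamma> 0 0 1"
    using assms(2) unfolding U3_def by blast
  moreover obtain a b c where "a \<in> Eis" "b \<in> Eis" "c \<in> Eis"
      "g = M3 1 (3 * a) (3 * b) 0 1 (3 * c) 0 0 1"
    using assms(3) unfolding Gamma_inf3_iff by blast
  ultimately show ?thesis using that by blast
qed

lemma upper_triangular_SL_o_iff:
  "X \<in> SL_o \<and> upper_triangular X \<longleftrightarrow> (\<exists>d\<in>D3. \<exists>u\<in>U3. \<exists>g\<in>Gamma_inf3. X = d ** (u ** g))"
proof
  assume X: "X \<in> SL_o \<and> upper_triangular X"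
  then have up: "X $ 2 $ 1 = 0" "X $ 3 $ 1 = 0" "X $ 3 $ 2 = 0"
    by (simp_all add: upper_triangular_def)
  define i j k where "i = X $ 1 $ 1" "j = X $ 2 $ 2" "k = X $ 3 $ 3"
  have E: "X $ p $ q \<in> Eis" for p q using X by (simp add: SL_o_entry)
  have "det X = 1" using X by (simp add: SL_o_det)
  then have ijk: "i * j * k = 1"
    unfolding i_j_k_def using up by (simp add: det_3)
  define x y z where "x = X $ 1 $ 2 * (j * k)" "y = X $ 1 $ 3 * (j * k)" "z = X $ 2 $ 3 * (i * k)"
  have xyz: "x \<in> Eis" "y \<in> Eis" "z \<in> Eis"
    unfolding x_y_z_def i_j_k_def using E by auto
  obtain \<alpha> a where \<alpha>: "\<alpha> \<in> R9" "a \<in> Eis" "x - \<alpha> = 3 * a"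
    using residue_reps_exists[OF residue_reps_3_R9 xyz(1)] by (auto simp: Eis_dvd_def)
  obtain \<gamma> c where \<gamma>: "\<gamma> \<in> R9" "c \<in> Eis" "z - \<gamma> = 3 * c"
    using residue_reps_exists[OF residue_reps_3_R9 xyz(3)] by (auto simp: Eis_dvd_def)
  have "y - \<alpha> * (3 * c) \<in> Eis"
    using xyz \<alpha> \<gamma> residue_reps_3_R9 by (auto simp: residue_reps_def)
  then obtain \<beta> b where \<beta>: "\<beta> \<in> R9" "b \<in> Eis" "y - \<alpha> * (3 * c) - \<beta> = 3 * b"
    using residue_reps_exists[OF residue_reps_3_R9] unfolding Eis_dvd_def by blast
  have "M3 i 0 0 0 j 0 0 0 k \<in> D3"
    using ijk E unfolding D3_def i_j_k_def by blast
  moreover have "M3 1 \<alpha> \<beta> 0 1 \<gamma> 0 0 1 \<in> U3"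
    using \<alpha> \<beta> \<gamma> unfolding U3_def by blast
  moreover have "M3 1 (3 * a) (3 * b) 0 1 (3 * c) 0 0 1 \<in> Gamma_inf3"
    using \<alpha> \<beta> \<gamma> by (auto simp: Gamma_inf3_iff)
  moreover have "X = M3 i 0 0 0 j 0 0 0 k ** (M3 1 \<alpha> \<beta> 0 1 \<gamma> 0 0 1 ** M3 1 (3 * a) (3 * b) 0 1 (3 * c) 0 0 1)"
  proof -
    have "\<alpha> + 3 * a = x" "\<gamma> + 3 * c = z" "\<beta> + \<alpha> * (3 * c) + 3 * b = y"
      using \<alpha>(3) \<gamma>(3) \<beta>(3) by (simp_all add: algebra_simps)
    moreover have "i * x = X $ 1 $ 2" "i * y = X $ 1 $ 3" "j * z = X $ 2 $ 3"
      using ijk unfolding x_y_z_def i_j_k_def by (simp_all add: algebra_simps)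
    ultimately show ?thesis
      using up unfolding diagonal_unipotent_mult mat3_eq_iff i_j_k_def by simp
  qed
  ultimately show "\<exists>d\<in>D3. \<exists>u\<in>U3. \<exists>g\<in>Gamma_inf3. X = d ** (u ** g)" by blast
next
  assume "\<exists>d\<in>D3. \<exists>u\<in>U3. \<exists>g\<in>Gamma_inf3. X = d ** (u ** g)"
  then obtain d u g where dug: "d \<in> D3" "u \<in> U3" "g \<in> Gamma_inf3" "X = d ** (u ** g)"
    by blast
  obtain i j k \<alpha> \<beta> \<gamma> a b c where ijk: "i \<in> Eis" "j \<in> Eis" "k \<in> Eis" "i * j * k = 1"
    and R9: "\<alpha> \<in> R9" "\<beta> \<in> R9" "\<gamma> \<in> R9" and abc: "a \<in> Eis" "b \<in> Eis" "c \<in> Eis"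
    and "d = M3 i 0 0 0 j 0 0 0 k" "u = M3 1 \<alpha> \<beta> 0 1 \<gamma> 0 0 1"
      "g = M3 1 (3 * a) (3 * b) 0 1 (3 * c) 0 0 1"
    using D3_U3_Gamma_inf3_cases[OF dug(1-3)] .
  then have X: "X = M3 i 0 0 0 j 0 0 0 k ** (M3 1 \<alpha> \<beta> 0 1 \<gamma> 0 0 1 ** M3 1 (3 * a) (3 * b) 0 1 (3 * c) 0 0 1)"
    using dug(4) by simp
  have "\<alpha> \<in> Eis" "\<beta> \<in> Eis" "\<gamma> \<in> Eis"
    using R9 residue_reps_3_R9 by (auto simp: residue_reps_def)
  then show "X \<in> SL_o \<and> upper_triangular X"
    using ijk abc unfolding X diagonal_unipotent_mult
    by (auto simp: SL_o_def upper_triangular_def forall_3 det_3 Eis_mult Eis_add)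
qed

lemma diagonal_unipotent_decomp_unique:
  assumes "d \<in> D3" "u \<in> U3" "g \<in> Gamma_inf3" "d' \<in> D3" "u' \<in> U3" "g' \<in> Gamma_inf3"
    and eq: "d ** (u ** g) = d' ** (u' ** g')"
  shows "d = d' \<and> u = u'"
proof -
  obtain i j k \<alpha> \<beta> \<gamma> a b c where ijk: "i * j * k = 1"
    and R9: "\<alpha> \<in> R9" "\<beta> \<in> R9" "\<gamma> \<in> R9" and abc: "a \<in> Eis" "b \<in> Eis" "c \<in> Eis"
    and d: "d = M3 i 0 0 0 j 0 0 0 k" and u: "u = M3 1 \<alpha> \<beta> 0 1 \<gamma> 0 0 1"
    and g: "g = M3 1 (3 * a) (3 * b) 0 1 (3 * c) 0 0 1"
    using D3_U3_Gamma_inf3_cases[OF assms(1-3)] by metis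
  obtain i' j' k' \<alpha>' \<beta>' \<gamma>' a' b' c' where
    R9': "\<alpha>' \<in> R9" "\<beta>' \<in> R9" "\<gamma>' \<in> R9" and abc': "a' \<in> Eis" "b' \<in> Eis" "c' \<in> Eis"
    and d': "d' = M3 i' 0 0 0 j' 0 0 0 k'" and u': "u' = M3 1 \<alpha>' \<beta>' 0 1 \<gamma>' 0 0 1"
    and g': "g' = M3 1 (3 * a') (3 * b') 0 1 (3 * c') 0 0 1"
    using D3_U3_Gamma_inf3_cases[OF assms(4-6)] by metis
  have R9_eq: "r = r'" if "r \<in> R9" "r' \<in> R9" "w \<in> Eis" "r - r' = 3 * w" for r r' w
    using residue_reps_unique[OF residue_reps_3_R9 that(1,2)] that(3,4)
    unfolding Eis_dvd_def by blast
  have "i \<noteq> 0" "j \<noteq> 0" using ijk by auto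
  then have diag: "i = i'" "j = j'" "k = k'" and e: "\<alpha> + 3 * a = \<alpha>' + 3 * a'"
      "\<gamma> + 3 * c = \<gamma>' + 3 * c'" "\<beta> + \<alpha> * (3 * c) + 3 * b = \<beta>' + \<alpha>' * (3 * c') + 3 * b'"
    using eq unfolding d u g d' u' g' diagonal_unipotent_mult mat3_eq_iff by auto
  have "\<alpha> - \<alpha>' = 3 * (a' - a)" "\<gamma> - \<gamma>' = 3 * (c' - c)"
    using e(1,2) by (simp_all add: algebra_simps)
  then have "\<alpha> = \<alpha>'" "\<gamma> = \<gamma>'"
    using R9_eq R9 R9' abc abc' by (meson Eis_diff)+
  moreover from this have "\<beta> - \<beta>' = 3 * (b' - b)"
    using e by (simp add: algebra_simps)
  then have "\<beta> = \<beta>'"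
    using R9_eq R9 R9' abc abc' by (meson Eis_diff)
  ultimately show ?thesis using diag by (simp add: d u d' u')
qed

section \<open>Row reduction of Delta_{1,1}\<close>

definition lower_left_minor :: "complex^3^3 \<Rightarrow> complex" where
  "lower_left_minor A = A $ 2 $ 1 * A $ 3 $ 2 - A $ 2 $ 2 * A $ 3 $ 1"

lemma Delta11_iff: "A \<in> Delta11 \<longleftrightarrow> A \<in> SL_o \<and> lower_left_minor A \<noteq> 0"
  by (simp add: Delta11_def lower_left_minor_def)

lemma lower_left_minor_phi2: "lower_left_minor (phi2 y ** A) = det y * lower_left_minor A"
  by (simp add: lower_left_minor_def matrix_mult_entry_3 det_2 algebra_simps)

lemma phi1_mult_row3 [simp]: "(phi1 y ** A) $ 3 $ j = A $ 3 $ j"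
  by (simp add: matrix_mult_entry_3)

lemma clears_phi2_mult: "(phi2 y ** A) $ 3 $ j = 0 \<longleftrightarrow> clears y (A $ 2 $ j) (A $ 3 $ j)"
  by (simp add: clears_def matrix_mult_entry_3)

lemma clears_phi1_mult: "(phi1 y ** A) $ 2 $ j = 0 \<longleftrightarrow> clears y (A $ 1 $ j) (A $ 2 $ j)"
  by (simp add: clears_def matrix_mult_entry_3)

lemma clears_imp_second_nonzero:
  "clears y v1 v2 \<Longrightarrow> y $ 2 $ 1 \<noteq> 0 \<Longrightarrow> v1 \<noteq> 0 \<or> v2 \<noteq> 0 \<Longrightarrow> v2 \<noteq> 0"
  by (auto simp: clears_def)

lemma det2_nonzero_trivial_kernel:
  fixes y :: "'a::idom^2^2"
  assumes "det y \<noteq> 0" "y $ 1 $ 1 * v1 + y $ 1 $ 2 * v2 = 0" "y $ 2 $ 1 * v1 + y $ 2 $ 2 * v2 = 0"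
  shows "v1 = 0 \<and> v2 = 0"
proof -
  have "det y * v1 = y $ 2 $ 2 * (y $ 1 $ 1 * v1 + y $ 1 $ 2 * v2) - y $ 1 $ 2 * (y $ 2 $ 1 * v1 + y $ 2 $ 2 * v2)"
    "det y * v2 = y $ 1 $ 1 * (y $ 2 $ 1 * v1 + y $ 2 $ 2 * v2) - y $ 2 $ 1 * (y $ 1 $ 1 * v1 + y $ 1 $ 2 * v2)"
    by (simp_all add: det_2 algebra_simps)
  then have "det y * v1 = 0" "det y * v2 = 0"
    by (simp_all only: assms(2,3) mult_zero_right diff_zero)
  then show ?thesis using assms(1) by simp
qed

lemma det3_first_column_nonzero:
  "det (X :: 'a::comm_ring_1^3^3) \<noteq> 0 \<Longrightarrow> X $ 3 $ 1 = 0 \<Longrightarrow> X $ 1 $ 1 \<noteq> 0 \<or> X $ 2 $ 1 \<noteq> 0"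
  by (auto simp: det_3)

lemma det3_second_column_nonzero:
  "det (X :: 'a::comm_ring_1^3^3) \<noteq> 0 \<Longrightarrow> X $ 2 $ 1 = 0 \<Longrightarrow> X $ 3 $ 1 = 0 \<Longrightarrow> X $ 2 $ 2 \<noteq> 0 \<or> X $ 3 $ 2 \<noteq> 0"
  by (auto simp: det_3)

lemma upper_triangular_reduction_iff:
  fixes y1 y2 y3 :: "complex^2^2" and A :: "complex^3^3"
  assumes "det y3 \<noteq> 0"
  defines "A1 \<equiv> phi2 y1 ** A"
  defines "A2 \<equiv> phi1 y2 ** A1"
  shows "upper_triangular (phi2 y3 ** A2) \<longleftrightarrow>
    clears y1 (A $ 2 $ 1) (A $ 3 $ 1) \<and> clears y2 (A1 $ 1 $ 1) (A1 $ 2 $ 1) \<and>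
    clears y3 (A2 $ 2 $ 2) (A2 $ 3 $ 2)"
proof -
  have "(phi2 y3 ** A2) $ 2 $ 1 = y3 $ 1 $ 1 * A2 $ 2 $ 1 + y3 $ 1 $ 2 * A2 $ 3 $ 1"
    "(phi2 y3 ** A2) $ 3 $ 1 = y3 $ 2 $ 1 * A2 $ 2 $ 1 + y3 $ 2 $ 2 * A2 $ 3 $ 1"
    by (simp_all add: matrix_mult_entry_3)
  then have "(phi2 y3 ** A2) $ 2 $ 1 = 0 \<and> (phi2 y3 ** A2) $ 3 $ 1 = 0 \<longleftrightarrow>
      A2 $ 2 $ 1 = 0 \<and> A2 $ 3 $ 1 = 0"
    using det2_nonzero_trivial_kernel[OF assms(1), of "A2 $ 2 $ 1" "A2 $ 3 $ 1"] by auto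
  moreover have "A2 $ 2 $ 1 = 0 \<longleftrightarrow> clears y2 (A1 $ 1 $ 1) (A1 $ 2 $ 1)"
    unfolding A2_def by (rule clears_phi1_mult)
  moreover have "A2 $ 3 $ 1 = 0 \<longleftrightarrow> clears y1 (A $ 2 $ 1) (A $ 3 $ 1)"
    unfolding A2_def A1_def phi1_mult_row3 by (rule clears_phi2_mult)
  moreover have "(phi2 y3 ** A2) $ 3 $ 2 = 0 \<longleftrightarrow> clears y3 (A2 $ 2 $ 2) (A2 $ 3 $ 2)"
    by (rule clears_phi2_mult)
  ultimately show ?thesis unfolding upper_triangular_def by blast
qed

lemma Delta11_first_reduction_step:
  assumes "A \<in> Delta11" "det y1 \<noteq> 0" "clears y1 (A $ 2 $ 1) (A $ 3 $ 1)"
  shows "(phi2 y1 ** A) $ 2 $ 1 \<noteq> 0" "(phi2 y1 ** A) $ 3 $ 2 \<noteq> 0"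
proof -
  have "lower_left_minor (phi2 y1 ** A) \<noteq> 0"
    using assms(1,2) by (simp add: lower_left_minor_phi2 Delta11_iff)
  moreover have "(phi2 y1 ** A) $ 3 $ 1 = 0"
    using assms(3) by (simp add: clears_phi2_mult)
  ultimately show "(phi2 y1 ** A) $ 2 $ 1 \<noteq> 0" "(phi2 y1 ** A) $ 3 $ 2 \<noteq> 0"
    by (auto simp: lower_left_minor_def)
qed

lemma Delta11_reduction_exists:
  assumes C: "assoc_reps C" and R: "\<forall>c\<in>C. residue_reps c (R c)" and A: "A \<in> Delta11"
  shows "\<exists>y1\<in>Ymat C R. \<exists>y2\<in>Ymat C R. \<exists>y3\<in>Ymat C R. y2 \<noteq> mat 1 \<and> y3 \<noteq> mat 1 \<and>
    upper_triangular (phi2 y3 ** (phi1 y2 ** (phi2 y1 ** A)))"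
proof -
  have AS: "A \<in> SL_o" using A by (simp add: Delta11_iff)
  obtain y1 where y1: "y1 \<in> Ymat C R" "clears y1 (A $ 2 $ 1) (A $ 3 $ 1)"
    using Ymat_clears_exists[OF C R] AS by (meson SL_o_entry)
  define A1 where "A1 = phi2 y1 ** A"
  have A1S: "A1 \<in> SL_o" unfolding A1_def using y1(1) AS by (intro SL_o_mult phi2_SL_o Ymat_SL_o)
  have A1: "A1 $ 2 $ 1 \<noteq> 0" "A1 $ 3 $ 2 \<noteq> 0"
    unfolding A1_def using Delta11_first_reduction_step[OF A _ y1(2)] y1(1)
    by (simp_all add: Ymat_SL_o SL_o_det)
  obtain y2 where y2: "y2 \<in> Ymat C R" "clears y2 (A1 $ 1 $ 1) (A1 $ 2 $ 1)"
    using Ymat_clears_exists[OF C R] A1S by (meson SL_o_entry)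
  define A2 where "A2 = phi1 y2 ** A1"
  have A2S: "A2 \<in> SL_o" unfolding A2_def using y2(1) A1S by (intro SL_o_mult phi1_SL_o Ymat_SL_o)
  obtain y3 where y3: "y3 \<in> Ymat C R" "clears y3 (A2 $ 2 $ 2) (A2 $ 3 $ 2)"
    using Ymat_clears_exists[OF C R] A2S by (meson SL_o_entry)
  have "y2 \<noteq> mat 1" using y2(2) A1(1) by auto
  moreover have "y3 \<noteq> mat 1" using y3(2) A1(2) by (auto simp: A2_def)
  moreover have "upper_triangular (phi2 y3 ** (phi1 y2 ** (phi2 y1 ** A)))"
    using y1(2) y2(2) y3 by (simp add: upper_triangular_reduction_iff A2_def A1_def Ymat_SL_o SL_o_det)
  ultimately show ?thesis using y1(1) y2(1) y3(1) by blast
qed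

lemma Delta11_reduction_unique:
  assumes C: "assoc_reps C" and R: "\<forall>c\<in>C. residue_reps c (R c)" and A: "A \<in> Delta11"
    and y: "y1 \<in> Ymat C R" "y2 \<in> Ymat C R" "y3 \<in> Ymat C R"
    and y': "y1' \<in> Ymat C R" "y2' \<in> Ymat C R" "y3' \<in> Ymat C R"
    and upper: "upper_triangular (phi2 y3 ** (phi1 y2 ** (phi2 y1 ** A)))"
      "upper_triangular (phi2 y3' ** (phi1 y2' ** (phi2 y1' ** A)))"
  shows "y1 = y1' \<and> y2 = y2' \<and> y3 = y3'"
proof -
  have det: "det y1 \<noteq> 0" "det y3 \<noteq> 0" "det y3' \<noteq> 0"
    using y(1,3) y'(3) by (simp_all add: Ymat_SL_o SL_o_det)
  define A1 A2 where "A1 = phi2 y1 ** A" and "A2 = phi1 y2 ** A1"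
  have cl: "clears y1 (A $ 2 $ 1) (A $ 3 $ 1)" "clears y2 (A1 $ 1 $ 1) (A1 $ 2 $ 1)"
      "clears y3 (A2 $ 2 $ 2) (A2 $ 3 $ 2)"
    using upper(1) det(2) by (simp_all add: upper_triangular_reduction_iff A1_def A2_def)
  have cl': "clears y1' (A $ 2 $ 1) (A $ 3 $ 1)"
    using upper(2) det(3) by (simp add: upper_triangular_reduction_iff)
  have "A $ 2 $ 1 \<noteq> 0 \<or> A $ 3 $ 1 \<noteq> 0"
    using A by (auto simp: Delta11_iff lower_left_minor_def)
  then have y11: "y1 = y1'" using Ymat_clears_unique[OF C R y(1) cl(1) y'(1) cl'] by simp
  have A1: "A1 $ 2 $ 1 \<noteq> 0" "A1 $ 3 $ 2 \<noteq> 0"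
    using Delta11_first_reduction_step[OF A det(1) cl(1)] by (simp_all add: A1_def A2_def)
  have cl'2: "clears y2' (A1 $ 1 $ 1) (A1 $ 2 $ 1)"
    using upper(2) det(3) by (simp add: upper_triangular_reduction_iff A1_def y11)
  have y22: "y2 = y2'" using Ymat_clears_unique[OF C R y(2) cl(2) y'(2) cl'2] A1(1) by simp
  have cl'3: "clears y3' (A2 $ 2 $ 2) (A2 $ 3 $ 2)"
    using upper(2) det(3) by (simp add: upper_triangular_reduction_iff A1_def A2_def y11 y22)
  have "A2 $ 3 $ 2 \<noteq> 0" using A1(2) by (simp add: A1_def A2_def)
  then have "y3 = y3'" using Ymat_clears_unique[OF C R y(3) cl(3) y'(3) cl'3] by simp
  then show ?thesis using y11 y22 by simp
qed

lemma reduction_imp_Delta11: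
  assumes A: "A \<in> SL_o" and det: "det y1 = 1" "det y2 = 1" "det y3 = 1"
    and c: "y2 $ 2 $ 1 \<noteq> 0" "y3 $ 2 $ 1 \<noteq> 0"
    and upper: "upper_triangular (phi2 y3 ** (phi1 y2 ** (phi2 y1 ** A)))"
  shows "A \<in> Delta11"
proof -
  define A1 A2 where "A1 = phi2 y1 ** A" and "A2 = phi1 y2 ** A1"
  have cl: "clears y1 (A $ 2 $ 1) (A $ 3 $ 1)" "clears y2 (A1 $ 1 $ 1) (A1 $ 2 $ 1)"
      "clears y3 (A2 $ 2 $ 2) (A2 $ 3 $ 2)"
    using upper det(3) by (simp_all add: upper_triangular_reduction_iff A1_def A2_def)
  have detA: "det A1 = 1" "det A2 = 1"
    using A det by (simp_all add: A1_def A2_def det_mul det_phi1 det_phi2 SL_o_det)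
  have A1_31: "A1 $ 3 $ 1 = 0" using cl(1) by (simp add: A1_def A2_def clears_phi2_mult)
  then have "A1 $ 2 $ 1 \<noteq> 0"
    using clears_imp_second_nonzero[OF cl(2) c(1)] det3_first_column_nonzero[of A1] detA(1) by simp
  moreover have "A2 $ 2 $ 1 = 0" "A2 $ 3 $ 1 = 0"
    using cl(2) A1_31 by (simp_all add: A1_def A2_def clears_phi1_mult)
  then have "A2 $ 3 $ 2 \<noteq> 0"
    using clears_imp_second_nonzero[OF cl(3) c(2)] det3_second_column_nonzero[of A2] detA(2) by simp
  ultimately have "lower_left_minor A1 \<noteq> 0"
    using A1_31 by (simp add: lower_left_minor_def A1_def A2_def)
  then show ?thesis
    using A det(1) by (simp add: Delta11_iff A1_def A2_def lower_left_minor_phi2)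
qed

section \<open>The cells\<close>

lemma phi_reduction_inverse:
  assumes "det y1 = 1" "det y2 = 1" "det y3 = 1"
  shows "phi2 (matrix_inv y1) ** (phi1 (matrix_inv y2) ** (phi2 (matrix_inv y3) **
      (phi2 y3 ** (phi1 y2 ** (phi2 y1 ** A))))) = A"
  by (simp add: phi1_cancel phi2_cancel assms)

lemma mem_cell_iff:
  assumes "det y1 = 1" "det y2 = 1" "det y3 = 1"
  shows "A \<in> cell y1 y2 y3 d u \<longleftrightarrow>
    (\<exists>g\<in>Gamma_inf3. phi2 y3 ** (phi1 y2 ** (phi2 y1 ** A)) = d ** (u ** g))"
proof -
  have "A = phi2 (matrix_inv y1) ** (phi1 (matrix_inv y2) ** (phi2 (matrix_inv y3) ** X)) \<longleftrightarrow>
      phi2 y3 ** (phi1 y2 ** (phi2 y1 ** A)) = X" for X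
    using phi_reduction_inverse[OF assms, of A] by (auto simp: phi1_cancel phi2_cancel assms)
  then show ?thesis
    unfolding cell_def image_iff by (simp flip: matrix_mul_assoc)
qed

lemma cell_index_memD:
  assumes "(y1, y2, y3, d, u) \<in> cell_index C R"
  shows "y1 \<in> Ymat C R" "y2 \<in> Ymat C R" "y3 \<in> Ymat C R" "y2 \<noteq> mat 1" "y3 \<noteq> mat 1"
    "d \<in> D3" "u \<in> U3" "det y1 = 1" "det y2 = 1" "det y3 = 1"
  using assms by (auto simp: cell_index_def Ymat_SL_o SL_o_det)

lemma cell_subset_Delta11:
  assumes C: "assoc_reps C" and t: "(y1, y2, y3, d, u) \<in> cell_index C R"
  shows "cell y1 y2 y3 d u \<subseteq> Delta11"
proof
  fix A assume "A \<in> cell y1 y2 y3 d u"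
  note y = cell_index_memD[OF t]
  then obtain g where "g \<in> Gamma_inf3" and B: "phi2 y3 ** (phi1 y2 ** (phi2 y1 ** A)) = d ** (u ** g)"
    using \<open>A \<in> cell y1 y2 y3 d u\<close> mem_cell_iff by blast
  then have BS: "d ** (u ** g) \<in> SL_o" and "upper_triangular (d ** (u ** g))"
    using upper_triangular_SL_o_iff y(6,7) by blast+
  have "A = phi2 (matrix_inv y1) ** (phi1 (matrix_inv y2) ** (phi2 (matrix_inv y3) ** (d ** (u ** g))))"
    using phi_reduction_inverse[OF y(8-10), of A] B by simp
  also have "\<dots> \<in> SL_o"
    using y(1-3) BS by (intro SL_o_mult[OF _ SL_o_mult[OF _ SL_o_mult]] phi1_SL_o phi2_SL_o
        SL2_matrix_inv_SL_o Ymat_SL_o)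
  finally have "A \<in> SL_o" .
  moreover have "y2 $ 2 $ 1 \<noteq> 0" "y3 $ 2 $ 1 \<noteq> 0"
    using y(2-5) Ymat_eq_mat1_iff[OF C] by blast+
  ultimately show "A \<in> Delta11"
    using reduction_imp_Delta11 y(8-10) B \<open>upper_triangular (d ** (u ** g))\<close> by simp
qed

lemma Delta11_subset_cells:
  assumes C: "assoc_reps C" and R: "\<forall>c\<in>C. residue_reps c (R c)" and A: "A \<in> Delta11"
  shows "\<exists>(y1, y2, y3, d, u) \<in> cell_index C R. A \<in> cell y1 y2 y3 d u"
proof -
  obtain y1 y2 y3 where y: "y1 \<in> Ymat C R" "y2 \<in> Ymat C R" "y3 \<in> Ymat C R" "y2 \<noteq> mat 1" "y3 \<noteq> mat 1"
    and upper: "upper_triangular (phi2 y3 ** (phi1 y2 ** (phi2 y1 ** A)))"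
    using Delta11_reduction_exists[OF C R A] by blast
  have "phi2 y3 ** (phi1 y2 ** (phi2 y1 ** A)) \<in> SL_o"
    using y(1-3) A by (intro SL_o_mult phi1_SL_o phi2_SL_o Ymat_SL_o) (simp_all add: Delta11_iff)
  then obtain d u g where "d \<in> D3" "u \<in> U3" "g \<in> Gamma_inf3"
      "phi2 y3 ** (phi1 y2 ** (phi2 y1 ** A)) = d ** (u ** g)"
    using upper upper_triangular_SL_o_iff by blast
  moreover have "det y1 = 1" "det y2 = 1" "det y3 = 1"
    using y(1-3) by (simp_all add: Ymat_SL_o SL_o_det)
  ultimately have "(y1, y2, y3, d, u) \<in> cell_index C R" "A \<in> cell y1 y2 y3 d u"
    using y by (auto simp: cell_index_def mem_cell_iff)
  then show ?thesis by blast
qed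

lemma cells_disjoint:
  assumes C: "assoc_reps C" and R: "\<forall>c\<in>C. residue_reps c (R c)"
    and t: "(y1, y2, y3, d, u) \<in> cell_index C R" and t': "(y1', y2', y3', d', u') \<in> cell_index C R"
    and A: "A \<in> cell y1 y2 y3 d u" "A \<in> cell y1' y2' y3' d' u'"
  shows "(y1, y2, y3, d, u) = (y1', y2', y3', d', u')"
proof -
  note y = cell_index_memD[OF t] and y' = cell_index_memD[OF t']
  obtain g where g: "g \<in> Gamma_inf3" "phi2 y3 ** (phi1 y2 ** (phi2 y1 ** A)) = d ** (u ** g)"
    using A(1) mem_cell_iff y(8-10) by blast
  obtain g' where g': "g' \<in> Gamma_inf3" "phi2 y3' ** (phi1 y2' ** (phi2 y1' ** A)) = d' ** (u' ** g')"
    using A(2) mem_cell_iff y'(8-10) by blast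
  have "A \<in> Delta11" using cell_subset_Delta11[OF C t] A(1) by blast
  moreover have "upper_triangular (d ** (u ** g))" "upper_triangular (d' ** (u' ** g'))"
    using upper_triangular_SL_o_iff y(6,7) y'(6,7) g(1) g'(1) by blast+
  ultimately have "y1 = y1' \<and> y2 = y2' \<and> y3 = y3'"
    using Delta11_reduction_unique[OF C R _ y(1-3) y'(1-3)] g(2) g'(2) by simp
  then have "d ** (u ** g) = d' ** (u' ** g')" using g(2) g'(2) by simp
  then have "d = d' \<and> u = u'"
    using diagonal_unipotent_decomp_unique y(6,7) y'(6,7) g(1) g'(1) by blast
  with \<open>y1 = y1' \<and> y2 = y2' \<and> y3 = y3'\<close> show ?thesis by simp
qed

theorem theorem2p16:
  fixes C :: "complex set" and R :: "complex \<Rightarrow> complex set"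
  assumes "assoc_reps C"
    and "\<forall>c\<in>C. residue_reps c (R c)"
  shows "Delta11 = (\<Union>(y1, y2, y3, d, u) \<in> cell_index C R. cell y1 y2 y3 d u) \<and>
         (\<forall>t\<in>cell_index C R. \<forall>t'\<in>cell_index C R. t \<noteq> t' \<longrightarrow>
           (case t of (y1, y2, y3, d, u) \<Rightarrow> cell y1 y2 y3 d u) \<inter>
           (case t' of (y1, y2, y3, d, u) \<Rightarrow> cell y1 y2 y3 d u) = {})"
proof (intro conjI ballI impI)
  show "Delta11 = (\<Union>(y1, y2, y3, d, u) \<in> cell_index C R. cell y1 y2 y3 d u)"
    using Delta11_subset_cells[OF assms] cell_subset_Delta11[OF assms(1)] by fast
next
  fix t t' assume "t \<in> cell_index C R" "t' \<in> cell_index C R" "t \<noteq> t'"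
  then show "(case t of (y1, y2, y3, d, u) \<Rightarrow> cell y1 y2 y3 d u) \<inter>
      (case t' of (y1, y2, y3, d, u) \<Rightarrow> cell y1 y2 y3 d u) = {}"
    using cells_disjoint[OF assms] by (cases t; cases t') blast
qed

end
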